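(* Let $b\colon\mathbb R^d\to\mathbb R^d$ be a bounded Borel vector field of class $\mathrm{BV}_{\mathrm{loc}}$, defined everywhere, and let $$M:=\Big\{x\in\mathbb R^d:\ b(x)=0\ \text{and}\ \lim_{r\to0}\frac1r\,\frac{1}{\mathscr L^d(B_r(x))}\int_{B_r(x)}|b(y)|\,dy=0\Big\},$$ i.e. the set of points where $b$ vanishes, is approximately differentiable, and has zero approximate differential. Let $u\in L^\infty(\mathbb R^d)$ and suppose that $\mathrm{div}(ub)=\lambda$ in the sense of distributions, where $\lambda$ is a Radon measure on $\mathbb R^d$. Then $|\lambda|\llcorner M=0$, i.e. $|\lambda|(M)=0$.
   Context: $B_r(x)$ is the open ball of radius $r$ centered at $x$, $\mathscr L^d$ is Lebesgue measure, $|\lambda|$ is the total variation measure of $\lambda$. Approximate differentiability at $x$ with approximate value $b(x)$ and approximate differential $L$ means $\lim_{r\to 0} r^{-1}\frac{1}{\mathscr L^d(B_r(x))}\int_{B_r(x)}|b(y)-b(x)-L(y-x)|dy=0$; with $b(x)=0$ and $L=0$ this is the condition written in the definition of $M$. *)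

theory Defs
  imports "HOL-Analysis.Analysis"
begin

fun Ck :: "nat \<Rightarrow> ('a::euclidean_space \<Rightarrow> real) \<Rightarrow> bool" where
  "Ck 0 f = continuous_on UNIV f"
| "Ck (Suc k) f = (continuous_on UNIV f \<and> f differentiable_on UNIV \<and>
      (\<forall>i\<in>Basis. Ck k (\<lambda>x. frechet_derivative f (at x) i)))"

definition smooth_fun :: "('a::euclidean_space \<Rightarrow> real) \<Rightarrow> bool" where
  "smooth_fun f \<longleftrightarrow> (\<forall>k. Ck k f)"

definition test_fun :: "('a::euclidean_space \<Rightarrow> real) \<Rightarrow> bool" where
  "test_fun \<phi> \<longleftrightarrow> smooth_fun \<phi> \<and> compact (closure {x. \<phi> x \<noteq> 0})"

definition radon_measure :: "'a::euclidean_space measure \<Rightarrow> bool" where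
  "radon_measure \<mu> \<longleftrightarrow> sets \<mu> = sets borel \<and> (\<forall>K. compact K \<longrightarrow> emeasure \<mu> K < \<infinity>)"

text \<open>A real (signed) Radon measure \<lambda> is represented by its Jordan decomposition
  \<lambda> = \<mu>p - \<mu>m, with \<mu>p, \<mu>m positive Radon measures that are mutually singular;
  its total variation is |\<lambda>| = \<mu>p + \<mu>m.\<close>
definition signed_radon :: "'a::euclidean_space measure \<Rightarrow> 'a measure \<Rightarrow> bool" where
  "signed_radon \<mu>p \<mu>m \<longleftrightarrow> radon_measure \<mu>p \<and> radon_measure \<mu>m \<and>
     (\<exists>A\<in>sets borel. emeasure \<mu>p A = 0 \<and> emeasure \<mu>m (UNIV - A) = 0)"

definition tv_null :: "'a::euclidean_space measure \<Rightarrow> 'a measure \<Rightarrow> 'a set \<Rightarrow> bool" where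
  "tv_null \<mu>p \<mu>m S \<longleftrightarrow> (\<exists>N\<in>sets borel. S \<subseteq> N \<and> emeasure \<mu>p N + emeasure \<mu>m N = 0)"

definition BV_loc :: "('a::euclidean_space \<Rightarrow> 'a) \<Rightarrow> bool" where
  "BV_loc b \<longleftrightarrow> b \<in> borel_measurable lebesgue \<and>
     (\<forall>K. compact K \<longrightarrow> set_integrable lebesgue K (\<lambda>x. norm (b x))) \<and>
     (\<forall>i\<in>Basis. \<forall>j\<in>Basis. \<exists>\<nu>p \<nu>m. signed_radon \<nu>p \<nu>m \<and>
        (\<forall>\<phi>. test_fun \<phi> \<longrightarrow>
           (\<integral>x. (b x \<bullet> i) * frechet_derivative \<phi> (at x) j \<partial>lebesgue)
             = - ((\<integral>x. \<phi> x \<partial>\<nu>p) - (\<integral>x. \<phi> x \<partial>\<nu>m))))"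

definition div_eq :: "('a::euclidean_space \<Rightarrow> real) \<Rightarrow> ('a \<Rightarrow> 'a) \<Rightarrow> 'a measure \<Rightarrow> 'a measure \<Rightarrow> bool" where
  "div_eq u b \<mu>p \<mu>m \<longleftrightarrow> (\<forall>\<phi>. test_fun \<phi> \<longrightarrow>
     - (\<integral>x. u x * frechet_derivative \<phi> (at x) (b x) \<partial>lebesgue)
       = (\<integral>x. \<phi> x \<partial>\<mu>p) - (\<integral>x. \<phi> x \<partial>\<mu>m))"

end

theory Submission
  imports Defs "HOL-Computational_Algebra.Polynomial"
begin

text \<open>
  Testing \<open>div (u b) = \<lambda>\<close> against the bump \<open>\<psi>\<^sub>z\<^sub>,\<^sub>r(y) = \<phi>(1 - \<bar>y - z\<bar>\<^sup>2 / r\<^sup>2)\<close>,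
  \<open>\<phi>(t) = exp (-1/t)\<close>, whose gradient is \<open>O(1/r)\<close> and supported in \<open>B\<^sub>r(z)\<close>, gives
  \<open>\<lambda>(\<psi>\<^sub>z\<^sub>,\<^sub>r) \<le> C/r \<integral>\<^bsub>B\<^sub>r(z)\<^esub> \<bar>b\<bar>\<close>, which is \<open>o(r\<^sup>d)\<close> near points of \<open>M\<close>.
  Instead of a Besicovitch covering, these inequalities are integrated over the centres
  \<open>z\<close> in the \<open>r/2\<close>-neighbourhood \<open>E\<close> of a set \<open>S\<close>: by Tonelli, \<open>\<Psi> = 1\<^sub>E * \<psi>\<^sub>r\<close> satisfies
  \<open>\<integral> \<Psi> d\<lambda>\<^sup>+ \<le> \<integral> \<Psi> d\<lambda>\<^sup>- + o(r\<^sup>d) \<bar>U\<bar>\<close>, where \<open>\<Psi> \<ge> c r\<^sup>d\<close> on \<open>S\<close>, \<open>\<Psi> \<le> C r\<^sup>d\<close>, and \<open>\<Psi>\<close> vanishes outside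
  any open \<open>U\<close> containing the \<open>2r\<close>-neighbourhood of \<open>S\<close>. Hence \<open>\<lambda>\<^sup>+(S) \<lesssim> \<lambda>\<^sup>-(U) + \<epsilon> \<bar>U\<bar>\<close>;
  on the part of \<open>M\<close> where \<open>\<lambda>\<^sup>-\<close> vanishes, \<open>U\<close> can be chosen with \<open>\<lambda>\<^sup>-(U)\<close> small, so
  \<open>\<lambda>\<^sup>+(M) = 0\<close>, and \<open>\<lambda>\<^sup>-(M) = 0\<close> follows by replacing \<open>u\<close> with \<open>-u\<close>.
\<close>

section \<open>Smooth functions\<close>

lemma Ck_imp_continuous_on: "Ck k f \<Longrightarrow> continuous_on UNIV f"
  by (cases k) auto

lemma Ck_SucD: "Ck (Suc k) f \<Longrightarrow> Ck k f"
  by (induction k arbitrary: f) auto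

lemma Ck_const: "Ck k (\<lambda>x. c)"
proof (induction k arbitrary: c)
  case (Suc k)
  have "frechet_derivative (\<lambda>x. c) (at x) = (\<lambda>h. 0)" for x :: 'a
    by (rule frechet_derivative_at[symmetric]) (rule has_derivative_const)
  with Suc show ?case by (simp add: differentiable_on_def)
qed simp

lemma Ck_add:
  fixes f g :: "'a::euclidean_space \<Rightarrow> real"
  shows "Ck k f \<Longrightarrow> Ck k g \<Longrightarrow> Ck k (\<lambda>x. f x + g x)"
proof (induction k arbitrary: f g)
  case (Suc k)
  then have "f differentiable at x" "g differentiable at x" for x
    by (auto simp: differentiable_on_def)
  then have "frechet_derivative (\<lambda>x. f x + g x) (at x) =
        (\<lambda>h. frechet_derivative f (at x) h + frechet_derivative g (at x) h)" for x
    by (intro frechet_derivative_at[symmetric] has_derivative_add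
          frechet_derivative_works[THEN iffD1])
  with Suc show ?case
    by (auto intro!: continuous_on_add differentiable_on_add)
qed (auto intro: continuous_on_add)

lemma Ck_mult:
  fixes f g :: "'a::euclidean_space \<Rightarrow> real"
  shows "Ck k f \<Longrightarrow> Ck k g \<Longrightarrow> Ck k (\<lambda>x. f x * g x)"
proof (induction k arbitrary: f g)
  case (Suc k)
  then have "f differentiable at x" "g differentiable at x" for x
    by (auto simp: differentiable_on_def)
  then have "frechet_derivative (\<lambda>x. f x * g x) (at x) =
        (\<lambda>h. f x * frechet_derivative g (at x) h + frechet_derivative f (at x) h * g x)" for x
    by (intro frechet_derivative_at[symmetric] has_derivative_mult
          frechet_derivative_works[THEN iffD1])
  moreover have "Ck k f" "Ck k g"
    using Suc.prems Ck_SucD by blast+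
  ultimately show ?case using Suc
    by (auto intro!: continuous_on_mult differentiable_on_mult Ck_add)
qed (auto intro: continuous_on_mult)

lemma Ck_affine: "Ck k (\<lambda>y::'a::euclidean_space. c + y \<bullet> w)"
proof -
  have cont: "continuous_on UNIV (\<lambda>y::'a. c + y \<bullet> w)"
    by (intro continuous_intros)
  show ?thesis
  proof (cases k)
    case (Suc k')
    have "frechet_derivative (\<lambda>y::'a. c + y \<bullet> w) (at x) = (\<lambda>h. h \<bullet> w)" for x
      by (rule frechet_derivative_at[symmetric]) (auto intro!: derivative_eq_intros)
    moreover have "(\<lambda>y::'a. c + y \<bullet> w) differentiable_on UNIV"
      by (auto intro!: derivative_eq_intros simp: differentiable_on_def differentiable_def)
    ultimately show ?thesis
      using Suc cont by (simp add: Ck_const)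
  qed (simp add: cont)
qed

section \<open>The flat function\<close>

lemma poly_times_exp_neg_tendsto_0: "((\<lambda>s. poly p s * exp (- s)) \<longlongrightarrow> (0::real)) at_top"
proof -
  have "((\<lambda>s. \<Sum>i\<le>degree p. coeff p i * (s ^ i / exp s)) \<longlongrightarrow> (\<Sum>i\<le>degree p. coeff p i * 0)) at_top"
    by (intro tendsto_sum tendsto_mult tendsto_const tendsto_power_div_exp_0)
  moreover have "poly p s * exp (- s) = (\<Sum>i\<le>degree p. coeff p i * (s ^ i / exp s))" for s
    unfolding poly_altdef exp_minus by (simp add: sum_distrib_right divide_inverse mult.assoc)
  ultimately show ?thesis by simp
qed

text \<open>\<open>flat_deriv n\<close> is the \<open>n\<close>-th derivative of the flat function that is \<open>exp (-1/t)\<close>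
  for \<open>t > 0\<close> and \<open>0\<close> for \<open>t \<le> 0\<close>.\<close>

fun flat_poly :: "nat \<Rightarrow> real poly" where
  "flat_poly 0 = 1"
| "flat_poly (Suc n) = [:0, 0, 1:] * (flat_poly n - pderiv (flat_poly n))"

definition flat_deriv :: "nat \<Rightarrow> real \<Rightarrow> real" where
  "flat_deriv n t = (if t > 0 then poly (flat_poly n) (inverse t) * exp (- inverse t) else 0)"

lemma has_real_derivative_poly_inverse_exp:
  assumes "t > 0"
  shows "((\<lambda>t. poly p (inverse t) * exp (- inverse t)) has_real_derivative
          poly ([:0, 0, 1:] * (p - pderiv p)) (inverse t) * exp (- inverse t)) (at t)"
proof -
  have inv: "(inverse has_real_derivative - (inverse t ^ 2)) (at t)"
    using DERIV_inverse[of t] assms by (simp add: power2_eq_square)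
  have "((\<lambda>t. poly p (inverse t)) has_real_derivative
          poly (pderiv p) (inverse t) * (- (inverse t ^ 2))) (at t)"
    by (rule DERIV_chain2[OF poly_DERIV inv])
  moreover have "((\<lambda>t. exp (- inverse t)) has_real_derivative exp (- inverse t) * (inverse t ^ 2)) (at t)"
    using DERIV_chain2[OF DERIV_exp DERIV_minus[OF inv]] by simp
  ultimately show ?thesis
    using DERIV_mult by (fastforce simp: algebra_simps power2_eq_square)
qed

lemma flat_deriv_nonpos: "t \<le> 0 \<Longrightarrow> flat_deriv n t = 0"
  by (simp add: flat_deriv_def)

lemma flat_deriv_div_tendsto_0: "((\<lambda>h. flat_deriv n h / h) \<longlongrightarrow> 0) (at_right 0)"
proof -
  have "((\<lambda>h. poly (pCons 0 (flat_poly n)) (inverse h) * exp (- inverse h)) \<longlongrightarrow> 0) (at_right (0::real))"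
    using filterlim_compose[OF poly_times_exp_neg_tendsto_0 filterlim_inverse_at_top_right]
    by (simp only: o_def)
  moreover have "\<forall>\<^sub>F h in at_right 0.
      poly (pCons 0 (flat_poly n)) (inverse h) * exp (- inverse h) = flat_deriv n h / h"
    by (intro eventually_at_rightI[of 0 1]) (auto simp: flat_deriv_def field_simps)
  ultimately show ?thesis by (rule Lim_transform_eventually)
qed

lemma has_real_derivative_flat_deriv: "(flat_deriv n has_real_derivative flat_deriv (Suc n) t) (at t)"
proof (cases t "0::real" rule: linorder_cases)
  case less
  show ?thesis
    by (rule has_field_derivative_transform_within_open[where f="\<lambda>_. 0" and S="{..<0}"])
       (use less in \<open>auto simp: flat_deriv_def\<close>)
next
  case greater
  show ?thesis
    by (rule has_field_derivative_transform_within_open[where S="{0<..}"])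
       (use greater has_real_derivative_poly_inverse_exp[of t] in \<open>auto simp: flat_deriv_def\<close>)
next
  case equal
  have "((\<lambda>h. (flat_deriv n (0 + h) - flat_deriv n 0) / h) \<longlongrightarrow> 0) (at 0)"
  proof (rule filterlim_split_at)
    show "((\<lambda>h. (flat_deriv n (0 + h) - flat_deriv n 0) / h) \<longlongrightarrow> 0) (at_right 0)"
      using flat_deriv_div_tendsto_0[of n] by (simp add: flat_deriv_nonpos)
    have "\<forall>\<^sub>F h in at_left 0. 0 = (flat_deriv n (0 + h) - flat_deriv n 0) / h"
      by (intro eventually_at_leftI[of "-1"]) (auto simp: flat_deriv_nonpos)
    then show "((\<lambda>h. (flat_deriv n (0 + h) - flat_deriv n 0) / h) \<longlongrightarrow> 0) (at_left 0)"
      by (rule Lim_transform_eventually[OF tendsto_const])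
  qed
  then show ?thesis
    using equal by (simp add: DERIV_def flat_deriv_nonpos)
qed

lemma continuous_on_flat_deriv: "continuous_on UNIV (flat_deriv n)"
  using has_real_derivative_flat_deriv DERIV_isCont continuous_at_imp_continuous_on by blast

lemma flat_deriv_0_nonneg: "0 \<le> flat_deriv 0 t"
  and flat_deriv_0_le_1: "flat_deriv 0 t \<le> 1"
  by (auto simp: flat_deriv_def)

lemma flat_deriv_0_ge: "t \<ge> 1/2 \<Longrightarrow> exp (-2) \<le> flat_deriv 0 t"
proof -
  assume t: "t \<ge> 1/2"
  then have "inverse t \<le> 2"
    using le_imp_inverse_le[of "1/2" t] by simp
  with t show ?thesis by (simp add: flat_deriv_def)
qed

lemma flat_deriv_1_bounded: obtains G where "\<And>t. t \<le> 1 \<Longrightarrow> \<bar>flat_deriv 1 t\<bar> \<le> G"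
proof -
  have "bounded (flat_deriv 1 ` {0..1})"
    by (intro compact_imp_bounded compact_continuous_image
          continuous_on_subset[OF continuous_on_flat_deriv]) auto
  then obtain G where "\<And>t. t \<in> {0..1} \<Longrightarrow> \<bar>flat_deriv 1 t\<bar> \<le> G"
    unfolding bounded_iff by (metis image_eqI real_norm_def)
  then have "\<bar>flat_deriv 1 t\<bar> \<le> G" if "t \<le> 1" for t
    using that by (cases "t \<le> 0") (force simp: flat_deriv_nonpos)+
  then show ?thesis using that by blast
qed

lemma has_derivative_flat_deriv_quadratic:
  fixes m :: nat and s :: real and z y :: "'a::euclidean_space"
  shows "((\<lambda>y. flat_deriv m (1 - s * ((y - z) \<bullet> (y - z)))) has_derivative
      (\<lambda>h. - (s * (2 * ((y - z) \<bullet> h))) * flat_deriv (Suc m) (1 - s * ((y - z) \<bullet> (y - z))))) (at y)"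
  by (rule DERIV_compose_FDERIV[OF has_real_derivative_flat_deriv])
     (auto intro!: derivative_eq_intros simp: inner_commute algebra_simps)

lemma Ck_flat_deriv_quadratic:
  fixes z :: "'a::euclidean_space"
  shows "Ck k (\<lambda>y. flat_deriv m (1 - s * ((y - z) \<bullet> (y - z))))"
proof (induction k arbitrary: m)
  case 0
  show ?case
    by simp (intro continuous_on_compose2[OF continuous_on_flat_deriv] continuous_intros, auto)
next
  case (Suc k)
  let ?g = "\<lambda>y::'a. 1 - s * ((y - z) \<bullet> (y - z))"
  \<comment> \<open>the factor in front is written in the shape \<open>c + y \<bullet> w\<close> of \<open>Ck_affine\<close>\<close>
  have "frechet_derivative (\<lambda>y. flat_deriv m (?g y)) (at y) i =
      (2 * s * (z \<bullet> i) + y \<bullet> (- (2 * s) *\<^sub>R i)) * flat_deriv (Suc m) (?g y)" for y i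
    using frechet_derivative_at[OF has_derivative_flat_deriv_quadratic[of m s z y], symmetric]
    by (simp add: inner_commute algebra_simps)
  moreover have "Ck k (\<lambda>y. (2 * s * (z \<bullet> i) + y \<bullet> (- (2 * s) *\<^sub>R i)) * flat_deriv (Suc m) (?g y))" for i
    by (intro Ck_mult Ck_affine Suc.IH)
  moreover have "(\<lambda>y. flat_deriv m (?g y)) differentiable_on UNIV"
    unfolding differentiable_on_def differentiable_def
    using has_derivative_flat_deriv_quadratic by blast
  ultimately show ?case
    using Suc.IH[of m] Ck_imp_continuous_on by simp
qed

section \<open>Bump functions\<close>

definition bump :: "'a::euclidean_space \<Rightarrow> real \<Rightarrow> 'a \<Rightarrow> real" where
  "bump z r y = flat_deriv 0 (1 - (1 / r^2) * ((y - z) \<bullet> (y - z)))"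

lemma smooth_fun_bump: "smooth_fun (bump z r)"
  unfolding smooth_fun_def bump_def using Ck_flat_deriv_quadratic by blast

lemma bump_nonneg: "0 \<le> bump z r y"
  and bump_le_1: "bump z r y \<le> 1"
  by (simp_all add: bump_def flat_deriv_0_nonneg flat_deriv_0_le_1)

lemma bump_eq_0:
  assumes "r > 0" "r \<le> dist y z"
  shows "bump z r y = 0"
proof -
  have "r^2 \<le> (y - z) \<bullet> (y - z)"
    using assms power_mono[of r "dist y z" 2] by (simp add: dist_norm power2_norm_eq_inner)
  then show ?thesis
    using assms by (simp add: bump_def flat_deriv_nonpos field_simps)
qed

lemma bump_ge:
  assumes "r > 0" "dist y z \<le> r / 2"
  shows "exp (-2) \<le> bump z r y"
proof -
  have "(y - z) \<bullet> (y - z) \<le> (r/2)^2"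
    using assms power_mono[of "dist y z" "r/2" 2] by (simp add: dist_norm power2_norm_eq_inner)
  then have "(1 / r^2) * ((y - z) \<bullet> (y - z)) \<le> 1/4"
    using assms by (simp add: field_simps power2_eq_square)
  then have "1/2 \<le> 1 - (1 / r^2) * ((y - z) \<bullet> (y - z))"
    by linarith
  then show ?thesis by (simp add: bump_def flat_deriv_0_ge)
qed

lemma bump_commute: "bump z r y = bump y r z"
  by (simp add: bump_def algebra_simps inner_commute)

lemma test_fun_bump: "r > 0 \<Longrightarrow> test_fun (bump z r)"
proof -
  assume "r > 0"
  then have "{y. bump z r y \<noteq> 0} \<subseteq> ball z r"
    using bump_eq_0 by (force simp: dist_commute)
  then show ?thesis
    unfolding test_fun_def using smooth_fun_bump
    by (metis bounded_ball bounded_subset compact_closure)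
qed

lemma borel_measurable_bump: "bump z r \<in> borel_measurable borel"
  using smooth_fun_bump unfolding smooth_fun_def
  by (metis Ck_imp_continuous_on borel_measurable_continuous_onI)

lemma borel_measurable_bump_pair:
  "(\<lambda>(y, z). bump z r y) \<in> borel_measurable (borel :: ('a::euclidean_space \<times> 'a) measure)"
  "(\<lambda>(z, y). bump z r y) \<in> borel_measurable (borel :: ('a::euclidean_space \<times> 'a) measure)"
proof -
  have "continuous_on UNIV (\<lambda>(z, y). bump z r (y::'a))"
    unfolding bump_def case_prod_beta
    by (intro continuous_on_compose2[OF continuous_on_flat_deriv] continuous_intros) auto
  then show "(\<lambda>(z, y). bump z r y) \<in> borel_measurable (borel :: ('a \<times> 'a) measure)"
    by (rule borel_measurable_continuous_onI)
  then show "(\<lambda>(y, z). bump z r y) \<in> borel_measurable (borel :: ('a \<times> 'a) measure)"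
    by (subst bump_commute) (simp add: case_prod_beta)
qed

lemma frechet_derivative_bump:
  "frechet_derivative (bump z r) (at y) v =
     - (2 / r^2) * ((y - z) \<bullet> v) * flat_deriv 1 (1 - (1 / r^2) * ((y - z) \<bullet> (y - z)))"
  unfolding bump_def
  using frechet_derivative_at[OF has_derivative_flat_deriv_quadratic[of 0 "1 / r^2" z y], symmetric]
  by simp

lemma bump_derivative_bound:
  obtains G where "G \<ge> 0" "\<And>(z::'a::euclidean_space) r y v. r > 0 \<Longrightarrow>
    \<bar>frechet_derivative (bump z r) (at y) v\<bar> \<le> G / r * norm v * indicator (ball z r) y"
proof -
  obtain G where G: "\<And>t. t \<le> 1 \<Longrightarrow> \<bar>flat_deriv 1 t\<bar> \<le> G"
    using flat_deriv_1_bounded by blast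
  have G0: "G \<ge> 0" using G[of 0] by simp
  have "\<bar>frechet_derivative (bump z r) (at y) v\<bar> \<le> 2 * G / r * norm v * indicator (ball z r) y"
    if r: "r > 0" for z :: 'a and r y v
  proof (cases "y \<in> ball z r")
    case True
    let ?t = "1 - (1 / r^2) * ((y - z) \<bullet> (y - z))"
    have "\<bar>(y - z) \<bullet> v\<bar> \<le> r * norm v"
      using Cauchy_Schwarz_ineq2[of "y - z" v] True mult_right_mono[of "norm (y - z)" r "norm v"]
      by (simp add: dist_norm norm_minus_commute)
    moreover have "\<bar>flat_deriv 1 ?t\<bar> \<le> G"
      by (intro G) simp
    ultimately have "(2 / r^2) * \<bar>(y - z) \<bullet> v\<bar> * \<bar>flat_deriv 1 ?t\<bar> \<le> (2 / r^2) * (r * norm v) * G"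
      using G0 by (intro mult_mono mult_left_mono) auto
    with True r show ?thesis
      by (simp add: frechet_derivative_bump abs_mult power2_eq_square field_simps)
  next
    case False
    have "r^2 \<le> (y - z) \<bullet> (y - z)"
      using False r power_mono[of r "dist y z" 2]
      by (simp add: dist_norm power2_norm_eq_inner norm_minus_commute)
    with r False show ?thesis
      by (simp add: frechet_derivative_bump flat_deriv_nonpos field_simps)
  qed
  moreover have "2 * G \<ge> 0" using G0 by simp
  ultimately show ?thesis using that by blast
qed

section \<open>Testing the divergence with bumps\<close>

lemma BV_loc_set_integrable_ball:
  "BV_loc b \<Longrightarrow> set_integrable lebesgue (ball z r) (\<lambda>x. norm (b x))"
  unfolding BV_loc_def by (rule set_integrable_subset[of _ "cball z r"]) auto

lemma div_eq_uminus: "div_eq u b \<mu>p \<mu>m \<Longrightarrow> div_eq (\<lambda>x. - u x) b \<mu>m \<mu>p"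
  unfolding div_eq_def by simp

lemma div_eq_bump_integral_diff_le:
  fixes b :: "'a::euclidean_space \<Rightarrow> 'a"
  assumes div: "div_eq u b \<mu>p \<mu>m"
    and u: "AE x in lebesgue. \<bar>u x\<bar> \<le> Cu" "Cu \<ge> 0"
    and b: "set_integrable lebesgue (ball z r) (\<lambda>x. norm (b x))"
    and r: "r > 0"
    and G: "G \<ge> 0" "\<And>y v. \<bar>frechet_derivative (bump z r) (at y) v\<bar> \<le> G / r * norm v * indicator (ball z r) y"
  shows "(\<integral>x. bump z r x \<partial>\<mu>p) - (\<integral>x. bump z r x \<partial>\<mu>m)
          \<le> Cu * G / r * (LINT y:ball z r|lebesgue. norm (b y))"
proof -
  let ?D = "\<lambda>x. frechet_derivative (bump z r) (at x) (b x)"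
  let ?bound = "\<lambda>x. Cu * G / r * (indicator (ball z r) x *\<^sub>R norm (b x))"
  have "(\<integral>x. bump z r x \<partial>\<mu>p) - (\<integral>x. bump z r x \<partial>\<mu>m) = - (\<integral>x. u x * ?D x \<partial>lebesgue)"
    using div test_fun_bump[OF r] unfolding div_eq_def by metis
  also have "\<dots> = (\<integral>x. - (u x * ?D x) \<partial>lebesgue)"
    by simp
  also have "\<dots> \<le> (\<integral>x. ?bound x \<partial>lebesgue)"
  proof (rule integral_mono_AE')
    show "integrable lebesgue ?bound"
      using b unfolding set_integrable_def by (intro integrable_mult_right)
    show "AE x in lebesgue. 0 \<le> ?bound x"
      using u(2) G(1) r by (auto simp: indicator_def)
    show "AE x in lebesgue. - (u x * ?D x) \<le> ?bound x"
      using u(1)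
    proof eventually_elim
      case (elim x)
      have "- (u x * ?D x) \<le> \<bar>u x\<bar> * \<bar>?D x\<bar>"
        by (simp add: abs_mult[symmetric])
      also have "\<dots> \<le> Cu * (G / r * norm (b x) * indicator (ball z r) x)"
        using elim G(2)[of x "b x"] by (intro mult_mono) auto
      finally show ?case by (simp add: mult_ac)
    qed
  qed
  also have "\<dots> = Cu * G / r * (LINT y:ball z r|lebesgue. norm (b y))"
    by (simp add: set_lebesgue_integral_def)
  finally show ?thesis .
qed

lemma div_eq_bump_domination:
  fixes b :: "'a::euclidean_space \<Rightarrow> 'a"
  assumes div: "div_eq u b \<mu>p \<mu>m"
    and u: "\<exists>C. AE x in lebesgue. \<bar>u x\<bar> \<le> C"
    and b: "\<And>z r. set_integrable lebesgue (ball z r) (\<lambda>x. norm (b x))"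
  shows "\<exists>C\<ge>0. \<forall>z r. r > 0 \<longrightarrow> (\<integral>x. bump z r x \<partial>\<mu>p)
           \<le> (\<integral>x. bump z r x \<partial>\<mu>m) + C / r * (LINT y:ball z r|lebesgue. norm (b y))"
proof -
  obtain C where C: "AE x in lebesgue. \<bar>u x\<bar> \<le> C"
    using u by blast
  then have Cu: "AE x in lebesgue. \<bar>u x\<bar> \<le> max C 0"
    by (auto elim: eventually_mono)
  obtain G where G: "G \<ge> 0" "\<And>(z::'a) r y v. r > 0 \<Longrightarrow>
      \<bar>frechet_derivative (bump z r) (at y) v\<bar> \<le> G / r * norm v * indicator (ball z r) y"
    using bump_derivative_bound by blast
  have "(\<integral>x. bump z r x \<partial>\<mu>p) - (\<integral>x. bump z r x \<partial>\<mu>m)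
          \<le> max C 0 * G / r * (LINT y:ball z r|lebesgue. norm (b y))" if "r > 0" for z r
    by (intro div_eq_bump_integral_diff_le[OF div Cu] b that G(1) G(2)[OF that] max.cobounded2)
  moreover have "max C 0 * G \<ge> 0" using G(1) by simp
  ultimately show ?thesis
    by (metis diff_le_eq add.commute)
qed

lemma sets_pair_measure_borel:
  assumes "sets \<mu> = sets (borel :: 'a::euclidean_space measure)" "sets \<nu> = sets (borel :: 'b::euclidean_space measure)"
  shows "sets (\<mu> \<Otimes>\<^sub>M \<nu>) = sets (borel :: ('a \<times> 'b) measure)"
  using sets_pair_measure_cong[OF assms] by (metis borel_prod)

lemma set_integral_mono_set:
  fixes f :: "'a \<Rightarrow> real"
  assumes "A \<subseteq> B" "A \<in> sets M" "set_integrable M B f" "\<And>x. x \<in> B \<Longrightarrow> 0 \<le> f x"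
  shows "(LINT x:A|M. f x) \<le> (LINT x:B|M. f x)"
proof -
  have "set_integrable M A f"
    by (rule set_integrable_subset[OF assms(3,2,1)])
  with assms show ?thesis
    unfolding set_lebesgue_integral_def set_integrable_def
    by (intro integral_mono) (auto simp: indicator_def)
qed

lemma measurable_cover_of_eventual_covers:
  assumes N: "\<And>k::nat. N k \<in> sets M" "\<And>k. S k \<subseteq> N k" "\<And>k. emeasure M (N k) \<le> c"
    and S: "\<And>x. x \<in> T \<Longrightarrow> \<exists>k. \<forall>m\<ge>k. x \<in> S m"
  shows "\<exists>H\<in>sets M. T \<subseteq> H \<and> emeasure M H \<le> c"
proof (intro bexI conjI)
  let ?H = "\<lambda>k. \<Inter>m\<in>{k..}. N m"
  have H: "?H k \<in> sets M" for k
    using N(1) by (intro sets.countable_INT') auto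
  then show "(\<Union>k. ?H k) \<in> sets M"
    by auto
  show "T \<subseteq> (\<Union>k. ?H k)"
    using S N(2) by fastforce
  have "emeasure M (\<Union>k. ?H k) = (SUP k. emeasure M (?H k))"
    using H by (intro SUP_emeasure_incseq[symmetric]) (auto simp: incseq_def)
  also have "\<dots> \<le> c"
    using H N by (intro SUP_least order_trans[OF emeasure_mono N(3)]) auto
  finally show "emeasure M (\<Union>k. ?H k) \<le> c" .
qed

lemma null_cover_of_small_covers:
  assumes "\<And>e. e > 0 \<Longrightarrow> \<exists>H\<in>sets M. S \<subseteq> H \<and> emeasure M H \<le> ennreal (e * K)"
  shows "\<exists>N\<in>null_sets M. S \<subseteq> N"
proof -
  have "\<forall>n::nat. \<exists>H. H \<in> sets M \<and> S \<subseteq> H \<and> emeasure M H \<le> ennreal (inverse (real (Suc n)) * K)"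
    using assms by (metis inverse_positive_iff_positive of_nat_0_less_iff zero_less_Suc)
  then obtain H where H: "\<And>n. H n \<in> sets M" "\<And>n. S \<subseteq> H n"
      "\<And>n. emeasure M (H n) \<le> ennreal (inverse (real (Suc n)) * K)"
    by metis
  have "emeasure M (\<Inter>n. H n) \<le> ennreal (inverse (real (Suc n)) * K)" for n
  proof -
    have "emeasure M (\<Inter>n. H n) \<le> emeasure M (H n)"
      by (rule emeasure_mono) (auto simp: H(1))
    then show ?thesis
      using H(3) order_trans by blast
  qed
  moreover have "(\<lambda>n. ennreal (inverse (real (Suc n)) * K)) \<longlonglongrightarrow> ennreal 0"
    by (intro tendsto_ennrealI tendsto_mult_left_zero LIMSEQ_inverse_real_of_nat)
  ultimately have "emeasure M (\<Inter>n. H n) \<le> ennreal 0"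
    by (intro LIMSEQ_le_const) auto
  then show ?thesis
    using H by (intro bexI[of _ "\<Inter>n. H n"]) auto
qed

lemma radon_measure_sigma_finite:
  assumes "radon_measure (\<mu>::'a::euclidean_space measure)"
  shows "sigma_finite_measure \<mu>"
proof
  let ?A = "range (\<lambda>n::nat. cball (0::'a) (real n))"
  have sets: "sets \<mu> = sets borel" and fin: "\<And>K. compact K \<Longrightarrow> emeasure \<mu> K < \<infinity>"
    using assms unfolding radon_measure_def by auto
  have "\<Union>?A = UNIV"
    by (auto simp: dist_norm intro: real_arch_simple)
  moreover have "space \<mu> = UNIV"
    using sets_eq_imp_space_eq[OF sets] by simp
  moreover have "?A \<subseteq> sets \<mu>" "\<forall>a\<in>?A. emeasure \<mu> a \<noteq> \<infinity>"
    using sets fin[OF compact_cball] by (auto simp: less_top)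
  ultimately show "\<exists>A. countable A \<and> A \<subseteq> sets \<mu> \<and> \<Union>A = space \<mu> \<and> (\<forall>a\<in>A. emeasure \<mu> a \<noteq> \<infinity>)"
    by (intro exI[of _ ?A]) auto
qed

lemma radon_measure_null_set_open_cover:
  assumes radon: "radon_measure (\<mu>::'a::euclidean_space measure)"
    and B: "B \<in> sets borel" "emeasure \<mu> B = 0" "B \<subseteq> ball c R"
    and \<delta>: "\<delta> > 0"
  shows "\<exists>U. open U \<and> B \<subseteq> U \<and> U \<subseteq> ball c R \<and> emeasure \<mu> U < ennreal \<delta>"
proof -
  have sets: "sets \<mu> = sets borel"
    using radon by (simp add: radon_measure_def)
  define \<nu> where "\<nu> = density \<mu> (indicator (ball c R))"
  have sets_\<nu>: "sets \<nu> = sets borel"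
    using sets by (simp add: \<nu>_def)
  have \<nu>: "emeasure \<nu> X = emeasure \<mu> (ball c R \<inter> X)" if "X \<in> sets borel" for X
    unfolding \<nu>_def using that sets by (intro emeasure_restricted) auto
  have "emeasure \<nu> (space \<nu>) \<le> emeasure \<mu> (cball c R)"
    using \<nu>[of UNIV] sets_eq_imp_space_eq[OF sets_\<nu>] sets by (auto intro!: emeasure_mono)
  also have "\<dots> < \<infinity>"
    using radon unfolding radon_measure_def by auto
  finally have "(INF U \<in> {U. B \<subseteq> U \<and> open U}. emeasure \<nu> U) = emeasure \<nu> B"
    using outer_regular[OF sets_\<nu> _ B(1)] by auto
  also have "\<dots> = 0"
    using \<nu>[OF B(1)] B by (simp add: Int_absorb1)
  finally obtain U where U: "B \<subseteq> U" "open U" "emeasure \<nu> U < ennreal \<delta>"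
    using \<delta> by (metis (no_types, lifting) INF_less_iff ennreal_0 ennreal_less_iff mem_Collect_eq order_refl)
  show ?thesis
  proof (intro exI[of _ "U \<inter> ball c R"] conjI)
    show "emeasure \<mu> (U \<inter> ball c R) < ennreal \<delta>"
      using \<nu>[of U] U by (simp add: Int_commute)
  qed (use U B in auto)
qed

lemma tv_nullI:
  assumes "radon_measure \<mu>p" "radon_measure \<mu>m"
    and "Np \<in> null_sets \<mu>p" "S \<subseteq> Np" "Nm \<in> null_sets \<mu>m" "S \<subseteq> Nm"
  shows "tv_null \<mu>p \<mu>m S"
proof -
  have sets: "sets \<mu>p = sets borel" "sets \<mu>m = sets borel"
    using assms(1,2) by (simp_all add: radon_measure_def)
  have "Np \<inter> Nm \<in> null_sets \<mu>p" "Np \<inter> Nm \<in> null_sets \<mu>m"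
    using assms(3,5) sets by (auto intro: null_set_Int1 null_set_Int2)
  with assms(4,6) sets show ?thesis
    unfolding tv_null_def by (intro bexI[of _ "Np \<inter> Nm"]) auto
qed

lemma ball_volume_rescale:
  fixes \<omega> r :: real
  shows "\<omega> * r ^ d = exp (-2) * (\<omega> * (r/2) ^ d) * (exp 2 * 2 ^ d)"
    and "\<omega> * (2 * r) ^ d = exp (-2) * (\<omega> * (r/2) ^ d) * (exp 2 * 4 ^ d)"
proof -
  have exp: "exp (-2) * exp 2 = (1::real)"
    by (simp add: exp_minus)
  have "r = 2 * (r/2)" "2 * r = 4 * (r/2)"
    by simp_all
  then have pow: "r ^ d = 2 ^ d * (r/2) ^ d" "(2 * r) ^ d = 4 ^ d * (r/2) ^ d"
    by (metis power_mult_distrib)+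
  have "exp (-2) * (\<omega> * (r/2) ^ d) * (exp 2 * 2 ^ d) = (exp (-2) * exp 2) * (\<omega> * (2 ^ d * (r/2) ^ d))"
    "exp (-2) * (\<omega> * (r/2) ^ d) * (exp 2 * 4 ^ d) = (exp (-2) * exp 2) * (\<omega> * (4 ^ d * (r/2) ^ d))"
    by (simp_all only: mult_ac)
  then show "\<omega> * r ^ d = exp (-2) * (\<omega> * (r/2) ^ d) * (exp 2 * 2 ^ d)"
    and "\<omega> * (2 * r) ^ d = exp (-2) * (\<omega> * (r/2) ^ d) * (exp 2 * 4 ^ d)"
    by (simp_all only: exp pow mult_1_left)
qed

section \<open>Averaging bumps over a set\<close>

lemma integrable_bump:
  assumes "radon_measure \<mu>" "r > 0"
  shows "integrable \<mu> (bump z r)"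
proof (rule Bochner_Integration.integrable_bound)
  have sets: "sets \<mu> = sets borel" using assms unfolding radon_measure_def by auto
  show "integrable \<mu> (indicator (cball z r) :: _ \<Rightarrow> real)"
    using assms sets unfolding radon_measure_def by (intro integrable_real_indicator) auto
  show "bump z r \<in> borel_measurable \<mu>"
    using borel_measurable_bump measurable_cong_sets[OF sets refl] by blast
  show "AE x in \<mu>. norm (bump z r x) \<le> norm (indicator (cball z r) x :: real)"
    using bump_eq_0[OF assms(2), of _ z] bump_nonneg[of z r] bump_le_1[of z r]
    by (intro AE_I2) (auto simp: indicator_def dist_commute)
qed

lemma nn_integral_bump:
  assumes "radon_measure \<mu>" "r > 0"
  shows "(\<integral>\<^sup>+x. c * ennreal (bump z r x) \<partial>\<mu>) = c * ennreal (\<integral>x. bump z r x \<partial>\<mu>)"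
proof -
  have "sets \<mu> = sets borel" using assms unfolding radon_measure_def by auto
  then have "bump z r \<in> borel_measurable \<mu>"
    using borel_measurable_bump measurable_cong_sets[OF _ refl] by blast
  then have "(\<lambda>x. ennreal (bump z r x)) \<in> borel_measurable \<mu>"
    by (rule measurable_compose[OF _ measurable_ennreal])
  then have "(\<integral>\<^sup>+x. c * ennreal (bump z r x) \<partial>\<mu>) = c * \<integral>\<^sup>+x. ennreal (bump z r x) \<partial>\<mu>"
    by (rule nn_integral_cmult)
  also have "(\<integral>\<^sup>+x. ennreal (bump z r x) \<partial>\<mu>) = ennreal (\<integral>x. bump z r x \<partial>\<mu>)"
    by (intro nn_integral_eq_integral integrable_bump[OF assms] AE_I2 bump_nonneg)
  finally show ?thesis .
qed

definition bump_conv :: "'a::euclidean_space set \<Rightarrow> real \<Rightarrow> 'a \<Rightarrow> ennreal" where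
  "bump_conv E r y = (\<integral>\<^sup>+z. indicator E z * ennreal (bump z r y) \<partial>lborel)"

lemma borel_measurable_bump_conv_pair:
  assumes "E \<in> sets borel"
  shows "(\<lambda>(y, z). indicator E z * ennreal (bump z r y)) \<in> borel_measurable (borel :: ('a::euclidean_space \<times> 'a) measure)"
proof -
  have "(UNIV :: 'a set) \<times> E \<in> sets (borel \<Otimes>\<^sub>M borel)"
    by (rule pair_measureI) (use assms in auto)
  then have "UNIV \<times> E \<in> sets (borel :: ('a \<times> 'a) measure)"
    by (simp only: borel_prod)
  then have "indicator (UNIV \<times> E) \<in> (borel_measurable borel :: ('a \<times> 'a \<Rightarrow> ennreal) set)"
    by (rule borel_measurable_indicator)
  moreover have "(\<lambda>p. ennreal ((\<lambda>(y, z). bump z r y) p)) \<in> borel_measurable (borel :: ('a \<times> 'a) measure)"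
    using borel_measurable_bump_pair(1) by (rule measurable_compose[OF _ measurable_ennreal])
  ultimately have "(\<lambda>p. indicator (UNIV \<times> E) p * ennreal ((\<lambda>(y, z). bump z r y) p)) \<in> borel_measurable borel"
    by (rule borel_measurable_times_ennreal)
  moreover have "indicator (UNIV \<times> E) p = (indicator E (snd p) :: ennreal)" for p :: "'a \<times> 'a"
    by (simp add: indicator_def mem_Times_iff)
  ultimately show ?thesis
    by (simp add: case_prod_beta')
qed

lemma borel_measurable_bump_integral:
  assumes "radon_measure \<mu>" "r > 0"
  shows "(\<lambda>z. ennreal (\<integral>x. bump z r x \<partial>\<mu>)) \<in> borel_measurable borel"
proof -
  have sets: "sets \<mu> = sets borel"
    using assms unfolding radon_measure_def by auto
  have "(\<lambda>p. ennreal ((\<lambda>(z, y). bump z r y) p)) \<in> borel_measurable (borel \<Otimes>\<^sub>M \<mu>)"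
    using measurable_compose[OF borel_measurable_bump_pair(2) measurable_ennreal]
    by (simp add: measurable_cong_sets[OF sets_pair_measure_borel[OF refl sets] refl])
  then have "(\<lambda>z. \<integral>\<^sup>+y. ennreal (bump z r y) \<partial>\<mu>) \<in> borel_measurable borel"
    using sigma_finite_measure.borel_measurable_nn_integral[OF radon_measure_sigma_finite[OF assms(1)]]
    by (simp add: case_prod_beta')
  then show ?thesis
    using nn_integral_bump[OF assms, of 1] by simp
qed

lemma borel_measurable_bump_conv:
  "E \<in> sets borel \<Longrightarrow> bump_conv E r \<in> borel_measurable borel"
  unfolding bump_conv_def
  by (rule lborel.borel_measurable_nn_integral)
     (simp add: measurable_cong_sets[OF sets_pair_measure_borel refl] borel_measurable_bump_conv_pair)

lemma nn_integral_bump_conv: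
  assumes "radon_measure \<mu>" "r > 0" "E \<in> sets borel"
  shows "(\<integral>\<^sup>+y. bump_conv E r y \<partial>\<mu>) = (\<integral>\<^sup>+z. indicator E z * ennreal (\<integral>x. bump z r x \<partial>\<mu>) \<partial>lborel)"
proof -
  have sets: "sets \<mu> = sets borel"
    using assms unfolding radon_measure_def by auto
  interpret pair_sigma_finite \<mu> lborel
    unfolding pair_sigma_finite_def
    using radon_measure_sigma_finite[OF assms(1)] lborel.sigma_finite_measure_axioms by blast
  have "(\<lambda>(y, z). indicator E z * ennreal (bump z r y)) \<in> borel_measurable (\<mu> \<Otimes>\<^sub>M lborel)"
    by (simp add: measurable_cong_sets[OF sets_pair_measure_borel[OF sets sets_lborel] refl]
        borel_measurable_bump_conv_pair assms(3))
  then have "(\<integral>\<^sup>+y. bump_conv E r y \<partial>\<mu>) = (\<integral>\<^sup>+z. \<integral>\<^sup>+y. indicator E z * ennreal (bump z r y) \<partial>\<mu> \<partial>lborel)"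
    unfolding bump_conv_def by (rule Fubini'[symmetric])
  also have "\<dots> = (\<integral>\<^sup>+z. indicator E z * ennreal (\<integral>x. bump z r x \<partial>\<mu>) \<partial>lborel)"
    by (simp add: nn_integral_bump[OF assms(1,2)])
  finally show ?thesis .
qed

lemma bump_conv_ge:
  assumes "r > 0" "ball y (r/2) \<subseteq> E"
  shows "ennreal (exp (-2) * (unit_ball_vol DIM('a) * (r/2) ^ DIM('a))) \<le> bump_conv E r (y::'a::euclidean_space)"
proof -
  have "ennreal (exp (-2) * (unit_ball_vol DIM('a) * (r/2) ^ DIM('a)))
      = (\<integral>\<^sup>+z. ennreal (exp (-2)) * indicator (ball y (r/2)) z \<partial>lborel)"
    using assms(1) by (simp add: emeasure_ball ennreal_mult nn_integral_cmult_indicator)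
  also have "\<dots> \<le> bump_conv E r y"
    unfolding bump_conv_def
  proof (rule nn_integral_mono)
    fix z
    show "ennreal (exp (-2)) * indicator (ball y (r/2)) z \<le> indicator E z * ennreal (bump z r y)"
      using assms bump_ge[of r y z] by (auto simp: indicator_def dist_commute intro: ennreal_leI)
  qed
  finally show ?thesis .
qed

lemma bump_conv_le:
  assumes "r > 0" "\<And>z. z \<in> E \<Longrightarrow> ball z r \<subseteq> U"
  shows "bump_conv E r y \<le> ennreal (unit_ball_vol DIM('a) * r ^ DIM('a)) * indicator U (y::'a::euclidean_space)"
proof -
  have "bump_conv E r y \<le> (\<integral>\<^sup>+z. indicator U y * indicator (ball y r) z \<partial>lborel)"
    unfolding bump_conv_def
  proof (rule nn_integral_mono)
    fix z
    show "indicator E z * ennreal (bump z r y) \<le> indicator U y * indicator (ball y r) z"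
    proof (cases "z \<in> E \<and> dist y z < r")
      case True
      then have "y \<in> U" using assms(2)[of z] by (auto simp: dist_commute)
      with True show ?thesis using bump_le_1[of z r y] by (simp add: dist_commute)
    qed (use bump_eq_0[OF assms(1), of y z] in \<open>auto simp: indicator_def not_less\<close>)
  qed
  also have "\<dots> = ennreal (unit_ball_vol DIM('a) * r ^ DIM('a)) * indicator U y"
    using assms(1) by (simp add: nn_integral_cmult_indicator emeasure_ball mult.commute)
  finally show ?thesis .
qed

lemma nn_integral_bump_conv_le_measure:
  assumes "radon_measure \<mu>" "r > 0" "U \<in> sets borel" "\<And>z. z \<in> E \<Longrightarrow> ball z r \<subseteq> U"
  shows "(\<integral>\<^sup>+y. bump_conv E r y \<partial>\<mu>) \<le> ennreal (unit_ball_vol DIM('a) * r ^ DIM('a)) * emeasure \<mu> (U::'a::euclidean_space set)"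
proof -
  have "(\<integral>\<^sup>+y. bump_conv E r y \<partial>\<mu>)
      \<le> (\<integral>\<^sup>+y. ennreal (unit_ball_vol DIM('a) * r ^ DIM('a)) * indicator U y \<partial>\<mu>)"
    by (intro nn_integral_mono bump_conv_le[OF assms(2,4)])
  also have "\<dots> = ennreal (unit_ball_vol DIM('a) * r ^ DIM('a)) * emeasure \<mu> U"
    using assms(1,3) unfolding radon_measure_def by (intro nn_integral_cmult_indicator) auto
  finally show ?thesis .
qed

lemma nn_integral_bump_conv_le:
  fixes \<mu>p \<mu>m :: "'a::euclidean_space measure"
  assumes radon: "radon_measure \<mu>p" "radon_measure \<mu>m"
    and r: "r > 0" and E: "E \<in> sets borel" and U: "U \<in> sets borel"
    and EU: "\<And>z. z \<in> E \<Longrightarrow> ball z r \<subseteq> U"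
    and B: "B \<ge> 0" "\<And>z. z \<in> E \<Longrightarrow> (\<integral>x. bump z r x \<partial>\<mu>p) \<le> (\<integral>x. bump z r x \<partial>\<mu>m) + B"
  shows "(\<integral>\<^sup>+y. bump_conv E r y \<partial>\<mu>p)
           \<le> ennreal (unit_ball_vol DIM('a) * r ^ DIM('a)) * emeasure \<mu>m U + ennreal B * emeasure lborel U"
proof -
  let ?I = "\<lambda>\<mu> z. indicator E z * ennreal (\<integral>x. bump z r x \<partial>\<mu>)"
  have "E \<subseteq> U"
    using EU r centre_in_ball by blast
  then have E_le: "emeasure lborel E \<le> emeasure lborel U"
    using U by (intro emeasure_mono) auto
  have "(\<integral>\<^sup>+y. bump_conv E r y \<partial>\<mu>p) = (\<integral>\<^sup>+z. ?I \<mu>p z \<partial>lborel)"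
    by (rule nn_integral_bump_conv[OF radon(1) r E])
  also have "\<dots> \<le> (\<integral>\<^sup>+z. ?I \<mu>m z + ennreal B * indicator E z \<partial>lborel)"
  proof (rule nn_integral_mono)
    fix z
    have "ennreal (\<integral>x. bump z r x \<partial>\<mu>p) \<le> ennreal (\<integral>x. bump z r x \<partial>\<mu>m) + ennreal B" if "z \<in> E"
    proof -
      have "0 \<le> (\<integral>x. bump z r x \<partial>\<mu>m)"
        by (intro integral_nonneg_AE AE_I2 bump_nonneg)
      with B(1) show ?thesis
        using ennreal_leI[OF B(2)[OF that]] by simp
    qed
    then show "?I \<mu>p z \<le> ?I \<mu>m z + ennreal B * indicator E z"
      by (simp add: indicator_def)
  qed
  also have "\<dots> = (\<integral>\<^sup>+z. ?I \<mu>m z \<partial>lborel) + ennreal B * emeasure lborel E"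
    using E borel_measurable_bump_integral[OF radon(2) r]
    by (subst nn_integral_add) (auto simp: nn_integral_cmult)
  also have "\<dots> = (\<integral>\<^sup>+y. bump_conv E r y \<partial>\<mu>m) + ennreal B * emeasure lborel E"
    by (simp add: nn_integral_bump_conv[OF radon(2) r E])
  also have "\<dots> \<le> ennreal (unit_ball_vol DIM('a) * r ^ DIM('a)) * emeasure \<mu>m U + ennreal B * emeasure lborel U"
    using nn_integral_bump_conv_le_measure[OF radon(2) r U EU] E_le by (intro add_mono mult_left_mono) auto
  finally show ?thesis .
qed

section \<open>Covering the points where the mean of \<open>f\<close> is \<open>o(r)\<close>\<close>

definition mean_o_radius :: "('a::euclidean_space \<Rightarrow> real) \<Rightarrow> 'a \<Rightarrow> bool" where
  "mean_o_radius f x \<longleftrightarrow>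
     ((\<lambda>r. (LINT y:ball x r|lebesgue. f y) / measure lebesgue (ball x r) / r) \<longlongrightarrow> 0) (at_right 0)"

lemma mean_o_radius_imp_rate:
  assumes "mean_o_radius f x" "\<epsilon> > 0"
  shows "\<exists>\<rho>>0. \<forall>r. 0 < r \<and> r < \<rho> \<longrightarrow> (LINT y:ball x r|lebesgue. f y) \<le> \<epsilon> * r * measure lebesgue (ball x r)"
proof -
  obtain \<rho> where \<rho>: "\<rho> > 0" "\<And>r. 0 < r \<Longrightarrow> r < \<rho> \<Longrightarrow>
      (LINT y:ball x r|lebesgue. f y) / measure lebesgue (ball x r) / r < \<epsilon>"
    using order_tendstoD(2)[OF assms(1)[unfolded mean_o_radius_def] assms(2)]
    unfolding eventually_at_right_field by auto
  have "(LINT y:ball x r|lebesgue. f y) \<le> \<epsilon> * r * measure lebesgue (ball x r)" if r: "0 < r" "r < \<rho>" for r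
  proof -
    have "measure lebesgue (ball x r) > 0"
      using content_ball_pos[OF r(1), of x] by simp
    then show ?thesis
      using \<rho>(2)[OF r] r by (simp add: divide_less_eq mult_ac)
  qed
  with \<rho>(1) show ?thesis by blast
qed

definition rate_set :: "('a::euclidean_space \<Rightarrow> real) \<Rightarrow> real \<Rightarrow> 'a set \<Rightarrow> real \<Rightarrow> 'a set" where
  "rate_set f \<epsilon> U \<rho> = {x. ball x \<rho> \<subseteq> U \<and>
     (\<forall>r. 0 < r \<longrightarrow> r < \<rho> \<longrightarrow> (LINT y:ball x r|lebesgue. f y) \<le> \<epsilon> * r * measure lebesgue (ball x r))}"

lemma bump_integral_le_of_rate:
  fixes f :: "'a::euclidean_space \<Rightarrow> real"
  assumes dom: "\<And>z r. r > 0 \<Longrightarrow>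
      (\<integral>x. bump z r x \<partial>\<mu>p) \<le> (\<integral>x. bump z r x \<partial>\<mu>m) + C / r * (LINT y:ball z r|lebesgue. f y)"
    and C: "C \<ge> 0"
    and f: "set_integrable lebesgue (ball x (2 * r)) f" "\<And>y. 0 \<le> f y"
    and rate: "(LINT y:ball x (2 * r)|lebesgue. f y) \<le> \<epsilon> * (2 * r) * measure lebesgue (ball x (2 * r))"
    and r: "r > 0" and z: "dist x z < r"
  shows "(\<integral>x. bump z r x \<partial>\<mu>p)
           \<le> (\<integral>x. bump z r x \<partial>\<mu>m) + 2 * C * \<epsilon> * (unit_ball_vol DIM('a) * (2 * r) ^ DIM('a))"
proof -
  have "ball z r \<subseteq> ball x (2 * r)"
    using z by (simp add: ball_subset_ball_iff dist_commute)
  then have "(LINT y:ball z r|lebesgue. f y) \<le> (LINT y:ball x (2 * r)|lebesgue. f y)"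
    by (rule set_integral_mono_set[OF _ _ f]) simp
  also note rate
  finally have "(LINT y:ball z r|lebesgue. f y) \<le> \<epsilon> * (2 * r) * measure lebesgue (ball x (2 * r))" .
  then have "C / r * (LINT y:ball z r|lebesgue. f y) \<le> C / r * (\<epsilon> * (2 * r) * measure lebesgue (ball x (2 * r)))"
    using C r by (intro mult_left_mono) auto
  also have "\<dots> = 2 * C * \<epsilon> * (unit_ball_vol DIM('a) * (2 * r) ^ DIM('a))"
    using r content_ball[of "2 * r" x] by simp
  finally show ?thesis
    using dom[OF r, of z] by linarith
qed

lemma bump_conv_cover:
  fixes \<mu>p \<mu>m :: "'a::euclidean_space measure"
  assumes radon: "radon_measure \<mu>p" "radon_measure \<mu>m"
    and r: "r > 0" and U: "open U" and SU: "\<And>x. x \<in> S \<Longrightarrow> ball x (2 * r) \<subseteq> U"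
    and B: "B \<ge> 0" "\<And>x z. x \<in> S \<Longrightarrow> dist x z < r/2 \<Longrightarrow>
      (\<integral>x. bump z r x \<partial>\<mu>p) \<le> (\<integral>x. bump z r x \<partial>\<mu>m) + B"
  shows "\<exists>N\<in>sets borel. S \<subseteq> N \<and> ennreal (exp (-2) * (unit_ball_vol DIM('a) * (r/2) ^ DIM('a))) * emeasure \<mu>p N
           \<le> ennreal (unit_ball_vol DIM('a) * r ^ DIM('a)) * emeasure \<mu>m U + ennreal B * emeasure lborel U"
proof -
  define c where "c = exp (-2) * (unit_ball_vol DIM('a) * (r/2) ^ DIM('a))"
  define E where "E = (\<Union>x\<in>S. ball x (r/2))"
  have E: "E \<in> sets borel"
    unfolding E_def by (intro borel_open open_UN) auto
  have EU: "ball z r \<subseteq> U" if "z \<in> E" for z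
  proof -
    obtain x where x: "x \<in> S" "dist x z < r/2" using \<open>z \<in> E\<close> by (auto simp: E_def)
    then have "ball z r \<subseteq> ball x (2 * r)"
      using r by (simp add: ball_subset_ball_iff dist_commute)
    then show ?thesis using SU[OF x(1)] by blast
  qed
  define N where "N = {y. ennreal c \<le> bump_conv E r y}"
  have [measurable]: "bump_conv E r \<in> borel_measurable borel"
    by (rule borel_measurable_bump_conv[OF E])
  have N: "N \<in> sets borel"
    unfolding N_def by measurable
  have "S \<subseteq> N"
  proof
    fix y assume "y \<in> S"
    then have "ball y (r/2) \<subseteq> E" by (auto simp: E_def)
    then show "y \<in> N"
      using bump_conv_ge[OF r] by (simp add: N_def c_def)
  qed
  have "ennreal c * emeasure \<mu>p N = (\<integral>\<^sup>+y. ennreal c * indicator N y \<partial>\<mu>p)"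
    using N radon(1) unfolding radon_measure_def by (simp add: nn_integral_cmult_indicator)
  also have "\<dots> \<le> (\<integral>\<^sup>+y. bump_conv E r y \<partial>\<mu>p)"
    by (intro nn_integral_mono) (auto simp: N_def indicator_def)
  also have "\<dots> \<le> ennreal (unit_ball_vol DIM('a) * r ^ DIM('a)) * emeasure \<mu>m U + ennreal B * emeasure lborel U"
    using U B(1) by (intro nn_integral_bump_conv_le radon r E EU) (auto simp: E_def intro: B(2))
  finally show ?thesis
    using \<open>S \<subseteq> N\<close> N unfolding c_def by blast
qed

lemma rate_set_cover:
  fixes \<mu>p \<mu>m :: "'a::euclidean_space measure" and f :: "'a \<Rightarrow> real"
  assumes radon: "radon_measure \<mu>p" "radon_measure \<mu>m"
    and dom: "\<And>z r. r > 0 \<Longrightarrow>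
      (\<integral>x. bump z r x \<partial>\<mu>p) \<le> (\<integral>x. bump z r x \<partial>\<mu>m) + C / r * (LINT y:ball z r|lebesgue. f y)"
    and C: "C \<ge> 0"
    and f: "\<And>z r. set_integrable lebesgue (ball z r) f" "\<And>y. 0 \<le> f y"
    and U: "open U" and \<rho>: "\<rho> > 0" and \<epsilon>: "\<epsilon> \<ge> 0"
  shows "\<exists>N\<in>sets borel. rate_set f \<epsilon> U \<rho> \<subseteq> N \<and>
     emeasure \<mu>p N \<le> ennreal (exp 2 * 4 ^ DIM('a)) * (emeasure \<mu>m U + ennreal (2 * C * \<epsilon>) * emeasure lborel U)"
proof -
  define r where "r = \<rho> / 4"
  have r: "r > 0" using \<rho> by (simp add: r_def)
  define \<omega> where "\<omega> = unit_ball_vol DIM('a)"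
  define K :: real where "K = exp 2 * 4 ^ DIM('a)"
  define c where "c = exp (-2) * (\<omega> * (r/2) ^ DIM('a))"
  have c: "c > 0" using r by (simp add: c_def \<omega>_def)
  have "(\<integral>x. bump z r x \<partial>\<mu>p) \<le> (\<integral>x. bump z r x \<partial>\<mu>m) + c * K * (2 * C * \<epsilon>)"
    if x: "x \<in> rate_set f \<epsilon> U \<rho>" "dist x z < r/2" for x z
  proof -
    have "\<forall>s. 0 < s \<longrightarrow> s < \<rho> \<longrightarrow> (LINT y:ball x s|lebesgue. f y) \<le> \<epsilon> * s * measure lebesgue (ball x s)"
      using x(1) by (simp add: rate_set_def)
    moreover have "0 < 2 * r" "2 * r < \<rho>"
      using \<rho> by (simp_all add: r_def)
    ultimately have "(LINT y:ball x (2 * r)|lebesgue. f y) \<le> \<epsilon> * (2 * r) * measure lebesgue (ball x (2 * r))"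
      by blast
    then have "(\<integral>x. bump z r x \<partial>\<mu>p) \<le> (\<integral>x. bump z r x \<partial>\<mu>m) + 2 * C * \<epsilon> * (\<omega> * (2 * r) ^ DIM('a))"
      unfolding \<omega>_def using x(2) r by (intro bump_integral_le_of_rate[OF dom C f]) auto
    moreover have "2 * C * \<epsilon> * (\<omega> * (2 * r) ^ DIM('a)) = c * K * (2 * C * \<epsilon>)"
      unfolding c_def K_def ball_volume_rescale(2) by (simp only: mult_ac)
    ultimately show ?thesis
      by linarith
  qed
  moreover have "ball x (2 * r) \<subseteq> U" if "x \<in> rate_set f \<epsilon> U \<rho>" for x
    using that r by (auto simp: rate_set_def r_def)
  ultimately obtain N where N: "N \<in> sets borel" "rate_set f \<epsilon> U \<rho> \<subseteq> N"
    "ennreal c * emeasure \<mu>p N \<le> ennreal (\<omega> * r ^ DIM('a)) * emeasure \<mu>m U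
       + ennreal (c * K * (2 * C * \<epsilon>)) * emeasure lborel U"
    using bump_conv_cover[OF radon r U, of "rate_set f \<epsilon> U \<rho>" "c * K * (2 * C * \<epsilon>)"] c C \<epsilon>
    unfolding c_def \<omega>_def K_def by auto
  note N(3)
  also have "ennreal (\<omega> * r ^ DIM('a)) * emeasure \<mu>m U \<le> ennreal (c * K) * emeasure \<mu>m U"
  proof -
    have "(2::real) ^ DIM('a) \<le> 4 ^ DIM('a)"
      by (rule power_mono) auto
    then have "\<omega> * r ^ DIM('a) \<le> c * K"
      unfolding ball_volume_rescale(1)[of \<omega> r] c_def[symmetric] K_def
      using c by (intro mult_left_mono) auto
    then show ?thesis
      by (intro mult_right_mono ennreal_leI) auto
  qed
  also have "ennreal (c * K) * emeasure \<mu>m U + ennreal (c * K * (2 * C * \<epsilon>)) * emeasure lborel U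
      = ennreal c * (ennreal K * (emeasure \<mu>m U + ennreal (2 * C * \<epsilon>) * emeasure lborel U))"
    using c C \<epsilon> by (simp add: K_def ennreal_mult distrib_left mult.assoc)
  finally show ?thesis
    using N(1,2) c by (auto simp: ennreal_mult_le_mult_iff K_def)
qed

lemma mean_o_radius_eventually_in_rate_set:
  assumes "mean_o_radius f x" "\<epsilon> > 0" "open U" "x \<in> U"
  shows "\<exists>k. \<forall>m\<ge>k. x \<in> rate_set f \<epsilon> U (1 / Suc m)"
proof -
  obtain \<rho> where \<rho>: "\<rho> > 0" "\<forall>r. 0 < r \<and> r < \<rho> \<longrightarrow>
      (LINT y:ball x r|lebesgue. f y) \<le> \<epsilon> * r * measure lebesgue (ball x r)"
    using mean_o_radius_imp_rate[OF assms(1,2)] by blast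
  obtain \<eta> where \<eta>: "\<eta> > 0" "ball x \<eta> \<subseteq> U"
    using assms(3,4) open_contains_ball by blast
  obtain k :: nat where k: "1 / Suc k < min \<rho> \<eta>"
    using reals_Archimedean[of "min \<rho> \<eta>"] \<rho>(1) \<eta>(1) by (auto simp: inverse_eq_divide)
  have "x \<in> rate_set f \<epsilon> U (1 / Suc m)" if "m \<ge> k" for m
  proof -
    have "1 / Suc m \<le> 1 / Suc k"
      using that by (intro divide_left_mono) auto
    with k have "1 / Suc m < \<rho>" "1 / Suc m < \<eta>"
      by auto
    moreover from this(2) have "ball x (1 / Suc m) \<subseteq> U"
      using \<eta>(2) by (meson less_imp_le order_trans subset_ball)
    ultimately show ?thesis
      using \<rho>(2) by (auto simp: rate_set_def)
  qed
  then show ?thesis by blast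
qed

lemma mean_o_radius_small_cover:
  fixes \<mu>p \<mu>m :: "'a::euclidean_space measure" and f :: "'a \<Rightarrow> real"
  assumes radon: "radon_measure \<mu>p" "radon_measure \<mu>m"
    and dom: "\<And>z r. r > 0 \<Longrightarrow>
      (\<integral>x. bump z r x \<partial>\<mu>p) \<le> (\<integral>x. bump z r x \<partial>\<mu>m) + C / r * (LINT y:ball z r|lebesgue. f y)"
    and C: "C \<ge> 0"
    and f: "\<And>z r. set_integrable lebesgue (ball z r) f" "\<And>y. 0 \<le> f y"
    and B: "B \<in> sets borel" "emeasure \<mu>m B = 0" "B \<subseteq> ball 0 R"
    and S: "S \<subseteq> B" "\<And>x. x \<in> S \<Longrightarrow> mean_o_radius f x"
    and e: "e > 0"
  shows "\<exists>H\<in>sets borel. S \<subseteq> H \<and> emeasure \<mu>p H \<le>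
     ennreal (e * (exp 2 * 4 ^ DIM('a) * (1 + 2 * C * measure lborel (ball (0::'a) (R + 1)))))"
proof -
  define L where "L = measure lborel (ball (0::'a) (R + 1))"
  define K :: real where "K = exp 2 * 4 ^ DIM('a)"
  obtain U where U: "open U" "B \<subseteq> U" "U \<subseteq> ball 0 (R + 1)" "emeasure \<mu>m U < ennreal e"
    using radon_measure_null_set_open_cover[OF radon(2) B(1,2) _ e, of 0 "R + 1"] B(3) by force
  have "emeasure lborel U \<le> emeasure lborel (ball (0::'a) (R + 1))"
    using U(3) by (intro emeasure_mono) auto
  then have LU: "emeasure lborel U \<le> ennreal L"
    using emeasure_lborel_ball_finite[of "0::'a" "R + 1"] by (simp add: L_def emeasure_eq_ennreal_measure)
  have "\<exists>N\<in>sets \<mu>p. rate_set f e U (1 / Suc k) \<subseteq> N \<and> emeasure \<mu>p N \<le> ennreal (e * (K * (1 + 2 * C * L)))"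
    for k :: nat
  proof -
    obtain N where N: "N \<in> sets borel" "rate_set f e U (1 / Suc k) \<subseteq> N"
        "emeasure \<mu>p N \<le> ennreal K * (emeasure \<mu>m U + ennreal (2 * C * e) * emeasure lborel U)"
      using rate_set_cover[OF radon dom C f U(1), of "1 / Suc k" e] e unfolding K_def by auto
    have "ennreal K * (emeasure \<mu>m U + ennreal (2 * C * e) * emeasure lborel U)
        \<le> ennreal K * (ennreal e + ennreal (2 * C * e) * ennreal L)"
      using U(4) LU by (intro mult_left_mono add_mono) auto
    also have "\<dots> = ennreal (K * (e + 2 * C * e * L))"
      using e C by (simp add: K_def L_def ennreal_mult)
    also have "K * (e + 2 * C * e * L) = e * (K * (1 + 2 * C * L))"
      by (simp add: algebra_simps)
    finally show ?thesis
      using N radon(1) order_trans unfolding radon_measure_def by auto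
  qed
  then obtain N where "\<And>k. N k \<in> sets \<mu>p" "\<And>k. rate_set f e U (1 / Suc k) \<subseteq> N k"
      "\<And>k. emeasure \<mu>p (N k) \<le> ennreal (e * (K * (1 + 2 * C * L)))"
    by metis
  moreover have "\<exists>k. \<forall>m\<ge>k. x \<in> rate_set f e U (1 / Suc m)" if "x \<in> S" for x
    using mean_o_radius_eventually_in_rate_set[OF S(2) e U(1)] that S(1) U(2) by blast
  ultimately have "\<exists>H\<in>sets \<mu>p. S \<subseteq> H \<and> emeasure \<mu>p H \<le> ennreal (e * (K * (1 + 2 * C * L)))"
    by (rule measurable_cover_of_eventual_covers)
  then show ?thesis
    using radon(1) unfolding radon_measure_def by (simp add: K_def L_def)
qed

lemma mean_o_radius_null_set:
  fixes \<mu>p \<mu>m :: "'a::euclidean_space measure" and f :: "'a \<Rightarrow> real"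
  assumes radon: "radon_measure \<mu>p" "radon_measure \<mu>m"
    and dom: "\<And>z r. r > 0 \<Longrightarrow>
      (\<integral>x. bump z r x \<partial>\<mu>p) \<le> (\<integral>x. bump z r x \<partial>\<mu>m) + C / r * (LINT y:ball z r|lebesgue. f y)"
    and C: "C \<ge> 0"
    and f: "\<And>z r. set_integrable lebesgue (ball z r) f" "\<And>y. 0 \<le> f y"
    and A: "A \<in> sets borel" "emeasure \<mu>p A = 0" "emeasure \<mu>m (UNIV - A) = 0"
    and S: "\<And>x. x \<in> S \<Longrightarrow> mean_o_radius f x"
  shows "\<exists>N\<in>null_sets \<mu>p. S \<subseteq> N"
proof -
  have sets: "sets \<mu>p = sets borel" "sets \<mu>m = sets borel"
    using radon by (simp_all add: radon_measure_def)
  have "\<exists>N\<in>null_sets \<mu>p. S \<inter> (ball 0 (real R) - A) \<subseteq> N" for R :: nat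
  proof (rule null_cover_of_small_covers)
    fix e :: real assume "e > 0"
    moreover have "emeasure \<mu>m (ball 0 (real R) - A) = 0"
      using A sets emeasure_mono[of "ball 0 (real R) - A" "UNIV - A" \<mu>m] by auto
    ultimately show "\<exists>H\<in>sets \<mu>p. S \<inter> (ball 0 (real R) - A) \<subseteq> H \<and> emeasure \<mu>p H
        \<le> ennreal (e * (exp 2 * 4 ^ DIM('a) * (1 + 2 * C * measure lborel (ball (0::'a) (real R + 1)))))"
      using mean_o_radius_small_cover[OF radon dom C f, of "ball 0 (real R) - A" "real R"
          "S \<inter> (ball 0 (real R) - A)" e] A(1) S sets
      by auto
  qed
  then obtain N where N: "\<And>R. N R \<in> null_sets \<mu>p" "\<And>R. S \<inter> (ball 0 (real R) - A) \<subseteq> N R"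
    by metis
  have "S \<subseteq> (\<Union>R. N R) \<union> A"
  proof
    fix x assume "x \<in> S"
    moreover obtain R :: nat where "norm x < real R"
      using reals_Archimedean2 by blast
    ultimately show "x \<in> (\<Union>R. N R) \<union> A"
      using N(2)[of R] by auto
  qed
  moreover have "(\<Union>R. N R) \<union> A \<in> null_sets \<mu>p"
    using N(1) A(1,2) sets by (intro null_sets.Un null_sets_UN) auto
  ultimately show ?thesis by blast
qed

theorem mainTheorem2:
  fixes b :: "'a::euclidean_space \<Rightarrow> 'a" and u :: "'a \<Rightarrow> real"
    and \<mu>p \<mu>m :: "'a measure"
  assumes b_borel: "b \<in> borel_measurable borel"
    and b_bounded: "bounded (range b)"
    and b_BV: "BV_loc b"
    and u_meas: "u \<in> borel_measurable lebesgue"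
    and u_Linf: "\<exists>C. AE x in lebesgue. \<bar>u x\<bar> \<le> C"
    and lambda: "signed_radon \<mu>p \<mu>m"
    and div: "div_eq u b \<mu>p \<mu>m"
  defines "M \<equiv> {x. b x = 0 \<and>
     ((\<lambda>r. (LINT y:ball x r|lebesgue. norm (b y)) / measure lebesgue (ball x r) / r)
        \<longlongrightarrow> 0) (at_right 0)}"
  shows "tv_null \<mu>p \<mu>m M"
proof -
  obtain A where A: "A \<in> sets borel" "emeasure \<mu>p A = 0" "emeasure \<mu>m (UNIV - A) = 0"
    and radon: "radon_measure \<mu>p" "radon_measure \<mu>m"
    using lambda unfolding signed_radon_def by blast
  note b_int = BV_loc_set_integrable_ball[OF b_BV]
  obtain Cp where Cp: "Cp \<ge> 0" "\<And>z r. r > 0 \<Longrightarrow> (\<integral>x. bump z r x \<partial>\<mu>p)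
      \<le> (\<integral>x. bump z r x \<partial>\<mu>m) + Cp / r * (LINT y:ball z r|lebesgue. norm (b y))"
    using div_eq_bump_domination[OF div u_Linf b_int] by blast
  obtain Cm where Cm: "Cm \<ge> 0" "\<And>z r. r > 0 \<Longrightarrow> (\<integral>x. bump z r x \<partial>\<mu>m)
      \<le> (\<integral>x. bump z r x \<partial>\<mu>p) + Cm / r * (LINT y:ball z r|lebesgue. norm (b y))"
    using div_eq_bump_domination[OF div_eq_uminus[OF div] _ b_int] u_Linf by auto
  have M: "mean_o_radius (\<lambda>y. norm (b y)) x" if "x \<in> M" for x
    using that unfolding M_def mean_o_radius_def by blast
  obtain Np where Np: "Np \<in> null_sets \<mu>p" "M \<subseteq> Np"
    using mean_o_radius_null_set[OF radon Cp(2) Cp(1) b_int _ A M] by auto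
  obtain Nm where Nm: "Nm \<in> null_sets \<mu>m" "M \<subseteq> Nm"
    using mean_o_radius_null_set[OF radon(2,1) Cm(2) Cm(1) b_int _ _ _ _ M, of "UNIV - A"] A
    by (auto simp: Diff_Diff_Int)
  show ?thesis
    by (rule tv_nullI[OF radon Np Nm])
qed

end
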